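(* Let $\mathcal{C}_1$ be an even-like $[n,k_1,d_1]_2$ binary linear code, let $\mathcal{C}_2$ be the $[n,1,n]_2$ repetition code generated by the all-ones vector, and let $\mathcal{C}=\{(\mathbf{u},\mathbf{u}+\mathbf{v}):\mathbf{u}\in\mathcal{C}_1,\mathbf{v}\in\mathcal{C}_2\}$. Then: 1) $\mathcal{C}$ is a binary almost Euclidean self-orthogonal code if and only if $n$ is odd; 2) $\mathcal{C}$ is a binary Euclidean self-orthogonal code if and only if $n$ is even.
   Context: A binary code is even-like if every codeword has even Hamming weight. For a binary $[N,k,d]_2$ code $\mathcal{C}$, $\mathrm{Hull}_E(\mathcal{C})=\mathcal{C}\cap\mathcal{C}^{\perp_E}$ with $\perp_E$ the dual under $\sum_ix_iy_i$; $\mathcal{C}$ is Euclidean self-orthogonal if $\dim(\mathrm{Hull}_E(\mathcal{C}))=k$ and almost Euclidean self-orthogonal if $\dim(\mathrm{Hull}_E(\mathcal{C}))=k-1$. *)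

theory Defs
  imports Main "HOL.Vector_Spaces" "HOL-Library.Z2" "HOL-Library.Function_Algebras"
begin

text \<open>Binary vectors of length n = CARD('n) are functions 'n \<Rightarrow> bit (bit = GF(2)).
  Vectors of length 2n are indexed by the sum type 'n + 'n.\<close>

definition bscale :: "bit \<Rightarrow> ('i \<Rightarrow> bit) \<Rightarrow> ('i \<Rightarrow> bit)" where
  "bscale c x = (\<lambda>i. c * x i)"

definition binary_linear_code :: "('i::finite \<Rightarrow> bit) set \<Rightarrow> bool" where
  "binary_linear_code C \<longleftrightarrow> module.subspace bscale C"

definition code_dim :: "('i::finite \<Rightarrow> bit) set \<Rightarrow> nat" where
  "code_dim C = vector_space.dim bscale C"

definition hamming_wt :: "('i::finite \<Rightarrow> bit) \<Rightarrow> nat" where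
  "hamming_wt x = card {i. x i \<noteq> 0}"

definition even_like :: "('i::finite \<Rightarrow> bit) set \<Rightarrow> bool" where
  "even_like C \<longleftrightarrow> (\<forall>x\<in>C. even (hamming_wt x))"

definition euclid_ip :: "('i::finite \<Rightarrow> bit) \<Rightarrow> ('i \<Rightarrow> bit) \<Rightarrow> bit" where
  "euclid_ip x y = (\<Sum>i\<in>UNIV. x i * y i)"

definition euclid_dual :: "('i::finite \<Rightarrow> bit) set \<Rightarrow> ('i \<Rightarrow> bit) set" where
  "euclid_dual C = {y. \<forall>x\<in>C. euclid_ip x y = 0}"

definition hull_E :: "('i::finite \<Rightarrow> bit) set \<Rightarrow> ('i \<Rightarrow> bit) set" where
  "hull_E C = C \<inter> euclid_dual C"

definition euclid_self_orth :: "('i::finite \<Rightarrow> bit) set \<Rightarrow> bool" where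
  "euclid_self_orth C \<longleftrightarrow> code_dim (hull_E C) = code_dim C"

definition almost_euclid_self_orth :: "('i::finite \<Rightarrow> bit) set \<Rightarrow> bool" where
  "almost_euclid_self_orth C \<longleftrightarrow> code_dim (hull_E C) + 1 = code_dim C"

definition repetition_code :: "('i::finite \<Rightarrow> bit) set" where
  "repetition_code = {(\<lambda>i. 0), (\<lambda>i. 1)}"

definition u_uv :: "('i::finite \<Rightarrow> bit) set \<Rightarrow> ('i \<Rightarrow> bit) set \<Rightarrow> ('i + 'i \<Rightarrow> bit) set" where
  "u_uv C1 C2 = {case_sum u (\<lambda>i. u i + v i) | u v. u \<in> C1 \<and> v \<in> C2}"

end

theory Submission
  imports Defs
begin

(* Write (u | u) for double u and e = (0 | 1) for ones_right. The code is the image of C1 under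
   the injective linear map u \<mapsto> (u | u), extended by the line through e, which does not lie in
   that image; so its dimension is k1 + 1. Over GF(2) the inner product of (u | u + a) and
   (v | v + b) is 2 u\<cdot>v + b wt(u) + a wt(v) + a b n = a b n, since C1 is even-like. Hence for
   even n the code is self-orthogonal, and for odd n its hull is exactly the image of C1. *)

(* Z2 rewrites + and * on bit into xor and conjunction, which destroys the ring reasoning below. *)
declare add_bit_eq_xor [simp del] mult_bit_eq_and [simp del]

lemma of_nat_bit: "(of_nat n :: bit) = (if even n then 0 else 1)"
  by (induction n) auto

lemma sum_eq_of_nat_hamming_wt: "(\<Sum>i\<in>UNIV. x i) = (of_nat (hamming_wt x) :: bit)"
proof -
  have "(\<Sum>i\<in>UNIV. x i) = (\<Sum>i\<in>{i. x i \<noteq> 0}. x i)"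
    by (rule sum.mono_neutral_right) auto
  also have "\<dots> = (\<Sum>i\<in>{i. x i \<noteq> 0}. 1)"
    by (rule sum.cong) auto
  finally show ?thesis
    by (simp add: hamming_wt_def)
qed

lemma sum_eq_0_if_even_like:
  assumes "even_like C" and "x \<in> C"
  shows "(\<Sum>i\<in>UNIV. x i) = 0"
  using assms by (simp add: even_like_def sum_eq_of_nat_hamming_wt of_nat_bit)

lemma bscale_0_left [simp]: "bscale 0 x = 0"
  by (simp add: bscale_def zero_fun_def)

lemma bscale_1_left [simp]: "bscale 1 x = x"
  by (simp add: bscale_def)

lemma vector_space_bscale: "vector_space (bscale :: bit \<Rightarrow> ('i \<Rightarrow> bit) \<Rightarrow> _)"
  by unfold_locales (auto simp: bscale_def fun_eq_iff distrib_left distrib_right)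

lemma finite_UNIV_bit_fun: "finite (UNIV :: ('i::finite \<Rightarrow> bit) set)"
proof -
  have "finite {f :: 'i \<Rightarrow> bit. \<forall>x. (x \<in> UNIV \<longrightarrow> f x \<in> {0, 1}) \<and> (x \<notin> UNIV \<longrightarrow> f x = 0)}"
    by (rule finite_set_of_finite_funs) simp_all
  moreover have "\<dots> = UNIV"
    by (auto intro: bit.exhaust)
  ultimately show ?thesis
    by simp
qed

lemma finite_dimensional_bscale:
  obtains B where "finite_dimensional_vector_space (bscale :: bit \<Rightarrow> ('i::finite \<Rightarrow> bit) \<Rightarrow> _) B"
proof -
  interpret vector_space "bscale :: bit \<Rightarrow> ('i \<Rightarrow> bit) \<Rightarrow> _"
    by (rule vector_space_bscale)
  obtain B where "independent B" "span B = UNIV"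
    using basis_exists[of UNIV] by (metis top.extremum_uniqueI)
  moreover have "finite B"
    using finite_UNIV_bit_fun by (rule finite_subset[OF subset_UNIV])
  ultimately show ?thesis
    by (intro that) (unfold_locales)
qed

lemma code_dim_image:
  fixes f :: "('i::finite \<Rightarrow> bit) \<Rightarrow> ('j::finite \<Rightarrow> bit)"
  assumes "Vector_Spaces.linear bscale bscale f" and "inj f"
  shows "code_dim (f ` C) = code_dim C"
proof -
  obtain B where "finite_dimensional_vector_space (bscale :: bit \<Rightarrow> ('i \<Rightarrow> bit) \<Rightarrow> _) B"
    by (rule finite_dimensional_bscale)
  then interpret finite_dimensional_vector_space_pair_1 "bscale :: bit \<Rightarrow> ('i \<Rightarrow> bit) \<Rightarrow> _" B
      "bscale :: bit \<Rightarrow> ('j \<Rightarrow> bit) \<Rightarrow> _"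
    by (rule finite_dimensional_vector_space_pair_1.intro[OF _ vector_space_bscale])
  show ?thesis
    unfolding code_dim_def using dim_image_eq[OF assms(1)] assms(2) by (simp add: inj_on_def inj_def)
qed

lemma code_dim_add_line:
  fixes C :: "('i::finite \<Rightarrow> bit) set"
  assumes "binary_linear_code C" and "e \<notin> C"
  shows "code_dim {x + bscale a e | x a. x \<in> C} = code_dim C + 1"
proof -
  obtain B where "finite_dimensional_vector_space (bscale :: bit \<Rightarrow> ('i \<Rightarrow> bit) \<Rightarrow> _) B"
    by (rule finite_dimensional_bscale)
  then interpret finite_dimensional_vector_space "bscale :: bit \<Rightarrow> ('i \<Rightarrow> bit) \<Rightarrow> _" B .
  have span_C: "span C = C"
    using assms(1) by (simp add: binary_linear_code_def)
  have "span (insert e C) = {x + bscale a e | x a. x \<in> C}"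
    unfolding span_insert span_C by (metis (no_types, opaque_lifting) add_diff_cancel diff_add_cancel)
  then have "code_dim {x + bscale a e | x a. x \<in> C} = dim (insert e C)"
    by (metis code_dim_def dim_span)
  also have "\<dots> = code_dim C + 1"
    using assms(2) by (simp add: dim_insert span_C code_dim_def)
  finally show ?thesis .
qed

lemma euclid_ip_sum_type:
  "euclid_ip x y = (\<Sum>i\<in>UNIV. x (Inl i) * y (Inl i)) + (\<Sum>i\<in>UNIV. x (Inr i) * y (Inr i))"
  unfolding euclid_ip_def UNIV_Plus_UNIV[symmetric] by (subst sum.Plus) simp_all

definition double :: "('i \<Rightarrow> bit) \<Rightarrow> ('i + 'i \<Rightarrow> bit)" where
  "double u = case_sum u u"

definition ones_right :: "'i + 'i \<Rightarrow> bit" where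
  "ones_right = case_sum (\<lambda>_. 0) (\<lambda>_. 1)"

lemma linear_double: "Vector_Spaces.linear bscale bscale (double :: ('i::finite \<Rightarrow> bit) \<Rightarrow> _)"
  unfolding Vector_Spaces.linear_iff double_def
  using vector_space_bscale[where 'i='i] vector_space_bscale[where 'i="'i + 'i"]
  by (auto simp: bscale_def fun_eq_iff split: sum.split)

lemma double_0 [simp]: "double 0 = 0"
  by (simp add: double_def fun_eq_iff split: sum.split)

lemma inj_double: "inj double"
  by (rule injI) (metis double_def fun_eq_iff sum.case(1))

lemma ones_right_notin_range_double: "(ones_right :: 'i + 'i \<Rightarrow> bit) \<notin> range double"
proof
  assume "(ones_right :: 'i + 'i \<Rightarrow> bit) \<in> range double"
  then obtain u :: "'i \<Rightarrow> bit" where u: "ones_right = double u"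
    by blast
  have "ones_right (Inl i) \<noteq> ones_right (Inr i)" "double u (Inl i) = double u (Inr i)" for i :: 'i
    by (simp_all add: ones_right_def double_def)
  with u show False
    by metis
qed

lemma u_uv_repetition_code:
  "u_uv C repetition_code = {double u + bscale a ones_right | u a. u \<in> C}"
proof -
  have constant_functions: "repetition_code = range (\<lambda>a i. a)"
    by (auto simp: repetition_code_def intro: bit.exhaust)
  have split: "case_sum u (\<lambda>i. u i + a) = double u + bscale a ones_right" for u and a :: bit
    by (auto simp: double_def ones_right_def bscale_def split: sum.split)
  have "u_uv C repetition_code = {case_sum u (\<lambda>i. u i + a) | u a. u \<in> C}"
    unfolding u_uv_def constant_functions by (auto 4 4 intro: rangeI)
  then show ?thesis
    by (simp only: split)
qed

lemma code_dim_u_uv_repetition_code: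
  fixes C :: "('i::finite \<Rightarrow> bit) set"
  assumes "binary_linear_code C"
  shows "code_dim (u_uv C repetition_code) = code_dim C + 1"
proof -
  have "binary_linear_code (double ` C)"
    using assms module_hom.subspace_image[of bscale bscale double] linear_double
    by (simp add: binary_linear_code_def module_hom_iff_linear)
  moreover have "ones_right \<notin> double ` C"
    using ones_right_notin_range_double by blast
  ultimately have "code_dim {x + bscale a ones_right | x a. x \<in> double ` C} = code_dim (double ` C) + 1"
    by (rule code_dim_add_line)
  moreover have "u_uv C repetition_code = {x + bscale a ones_right | x a. x \<in> double ` C}"
    unfolding u_uv_repetition_code by blast
  ultimately have "code_dim (u_uv C repetition_code) = code_dim (double ` C) + 1"
    by simp
  also have "code_dim (double ` C) = code_dim C"
    by (rule code_dim_image[OF linear_double inj_double])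
  finally show ?thesis .
qed

lemma euclid_ip_double_add:
  fixes u v :: "'i::finite \<Rightarrow> bit"
  assumes "(\<Sum>i\<in>UNIV. u i) = 0" and "(\<Sum>i\<in>UNIV. v i) = 0"
  shows "euclid_ip (double u + bscale a ones_right) (double v + bscale b ones_right)
    = a * b * of_nat (card (UNIV :: 'i set))"
proof -
  have char_2: "x * y + (x + a) * (y + b) = x * b + a * y + a * b" for x y :: bit
    by (cases x; cases y; cases a; cases b) simp_all
  have "euclid_ip (double u + bscale a ones_right) (double v + bscale b ones_right)
      = (\<Sum>i\<in>UNIV. u i * v i + (u i + a) * (v i + b))"
    by (simp add: euclid_ip_sum_type sum.distrib double_def ones_right_def bscale_def)
  also have "\<dots> = (\<Sum>i\<in>UNIV. u i) * b + a * (\<Sum>i\<in>UNIV. v i) + (\<Sum>i\<in>(UNIV :: 'i set). a * b)"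
    by (simp only: char_2 sum.distrib sum_distrib_left sum_distrib_right)
  also have "\<dots> = a * b * of_nat (card (UNIV :: 'i set))"
    using assms by simp
  finally show ?thesis .
qed

lemma hull_E_u_uv_repetition_code_even:
  fixes C :: "('i::finite \<Rightarrow> bit) set"
  assumes "even_like C" and "even (card (UNIV :: 'i set))"
  shows "hull_E (u_uv C repetition_code) = u_uv C repetition_code"
proof -
  have "euclid_ip x y = 0" if "x \<in> u_uv C repetition_code" "y \<in> u_uv C repetition_code" for x y
    using that assms
    by (auto simp: u_uv_repetition_code euclid_ip_double_add sum_eq_0_if_even_like of_nat_bit)
  then show ?thesis
    by (auto simp: hull_E_def euclid_dual_def)
qed

lemma hull_E_u_uv_repetition_code_odd:
  fixes C :: "('i::finite \<Rightarrow> bit) set"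
  assumes "binary_linear_code C" and "even_like C" and "odd (card (UNIV :: 'i set))"
  shows "hull_E (u_uv C repetition_code) = double ` C"
proof -
  have ip: "euclid_ip (double u + bscale a ones_right) (double v + bscale b ones_right) = a * b"
    if "u \<in> C" "v \<in> C" for u v a b
    using that assms(2,3) by (simp add: euclid_ip_double_add sum_eq_0_if_even_like of_nat_bit)
  have zero: "0 \<in> C"
    using assms(1) vector_space_bscale module.subspace_0
    by (metis binary_linear_code_def module_iff_vector_space)
  have "ones_right = double 0 + bscale 1 ones_right"
    by simp
  then have ones_right: "ones_right \<in> u_uv C repetition_code"
    using zero unfolding u_uv_repetition_code by blast
  show ?thesis
  proof (intro equalityI subsetI)
    fix x
    assume "x \<in> hull_E (u_uv C repetition_code)"
    then have "x \<in> u_uv C repetition_code" and "euclid_ip ones_right x = 0"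
      using ones_right by (auto simp: hull_E_def euclid_dual_def)
    moreover from this(1) obtain u a where x: "x = double u + bscale a ones_right" "u \<in> C"
      unfolding u_uv_repetition_code by blast
    moreover have "euclid_ip ones_right x = a"
      using ip[OF zero x(2), of 1 a] x(1) by simp
    ultimately show "x \<in> double ` C"
      by simp
  next
    fix x
    assume "x \<in> double ` C"
    then obtain u where x: "x = double u + bscale 0 ones_right" "u \<in> C"
      by auto
    have "euclid_ip y x = 0" if "y \<in> u_uv C repetition_code" for y
    proof -
      from that obtain v b where y: "y = double v + bscale b ones_right" "v \<in> C"
        unfolding u_uv_repetition_code by blast
      have "euclid_ip y x = b * 0"
        unfolding x(1) y(1) by (rule ip[OF y(2) x(2)])
      then show ?thesis
        by simp
    qed
    moreover have "x \<in> u_uv C repetition_code"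
      using x unfolding u_uv_repetition_code by blast
    ultimately show "x \<in> hull_E (u_uv C repetition_code)"
      by (simp add: hull_E_def euclid_dual_def)
  qed
qed

theorem lemma8:
  fixes C1 :: "('n::finite \<Rightarrow> bit) set"
  assumes "binary_linear_code C1"
    and "even_like C1"
  shows "(almost_euclid_self_orth (u_uv C1 repetition_code) \<longleftrightarrow> odd (card (UNIV :: 'n set)))
    \<and> (euclid_self_orth (u_uv C1 repetition_code) \<longleftrightarrow> even (card (UNIV :: 'n set)))"
proof -
  have dim: "code_dim (u_uv C1 repetition_code) = code_dim C1 + 1"
    using assms(1) by (rule code_dim_u_uv_repetition_code)
  show ?thesis
  proof (cases "even (card (UNIV :: 'n set))")
    case True
    with assms(2) have "hull_E (u_uv C1 repetition_code) = u_uv C1 repetition_code"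
      by (rule hull_E_u_uv_repetition_code_even)
    with True dim show ?thesis
      by (simp add: euclid_self_orth_def almost_euclid_self_orth_def)
  next
    case False
    with assms have "hull_E (u_uv C1 repetition_code) = double ` C1"
      by (rule hull_E_u_uv_repetition_code_odd)
    with False dim show ?thesis
      by (simp add: euclid_self_orth_def almost_euclid_self_orth_def
          code_dim_image[OF linear_double inj_double])
  qed
qed

end
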